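(* Let $d,d'\in\mathcal D$ be two deterministic stationary policies, and write $(\mathbf P,\mathbf r,\boldsymbol\pi,J_\mu,J_{\mu,\sigma},\mathbf g)$ for the quantities $(\mathbf P^d,\mathbf r^d,\boldsymbol\pi^d,J^d_\mu,J^d_{\mu,\sigma},\mathbf g^d)$ of $d$ and $(\mathbf P',\mathbf r',\boldsymbol\pi',J'_\mu,J'_{\mu,\sigma})$ for those of $d'$. Then $$J'_{\mu,\sigma}-J_{\mu,\sigma}=\boldsymbol\pi'\Big[(\mathbf P'-\mathbf P)\mathbf g+\mathbf r'-\beta(\mathbf r'-J_\mu\mathbf 1)^2_\odot-\mathbf r+\beta(\mathbf r-J_\mu\mathbf 1)^2_\odot\Big]+\beta\,(J'_\mu-J_\mu)^2 .$$
   Context: Let $\mathcal S=\{1,\dots,S\}$ be a finite state space and $\mathcal A$ a finite action set. For $i,j\in\mathcal S$, $a\in\mathcal A$, let $p^a(i,j)\ge 0$ with $\sum_{j}p^a(i,j)=1$ be transition probabilities and $r(i,a)\in\mathbb R$ rewards. A deterministic stationary policy is a map $d:\mathcal S\to\mathcal A$; $\mathcal D$ denotes the (finite) set of such policies. Under $d$, $\mathbf P^d$ is the $S\times S$ matrix with entries $p^{d(i)}(i,j)$ and $\mathbf r^d$ is the column vector with entries $r(i,d(i))$. Standing assumption: for every $d\in\mathcal D$ the Markov chain with transition matrix $\mathbf P^d$ is irreducible, so it has a unique stationary distribution, the row vector $\boldsymbol\pi^d$ with $\boldsymbol\pi^d\mathbf P^d=\boldsymbol\pi^d$, $\boldsymbol\pi^d\mathbf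 1=1$, all of whose entries are strictly positive ($\mathbf 1$ is the all-ones column vector). Define the long-run mean $J^d_\mu=\boldsymbol\pi^d\mathbf r^d$, the steady-state variance $J^d_\sigma=\sum_i\pi^d(i)(r(i,d(i))-J^d_\mu)^2$, and, for a fixed weight $\beta>0$, the mean-variance combined metric $J^d_{\mu,\sigma}=J^d_\mu-\beta J^d_\sigma=\boldsymbol\pi^d\mathbf f^d$, where $f^d(i)=r(i,d(i))-\beta(r(i,d(i))-J^d_\mu)^2$. The performance potential $\mathbf g^d$ is any column vector solving the Poisson equation $\mathbf g^d=\mathbf f^d-J^d_{\mu,\sigma}\mathbf 1+\mathbf P^d\mathbf g^d$ (solutions exist and are unique up to adding a constant multiple of $\mathbf 1$). For a vector $\mathbf v$, $(\mathbf v)^2_\odot$ denotes its componentwise square. *)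

theory Defs
  imports Complex_Main
begin

text \<open>Transition kernel p i a j = p^a(i,j); rewards r i a = r(i,a).
  A deterministic stationary policy is d :: 's \<Rightarrow> 'a.\<close>

definition Pmat :: "('s \<Rightarrow> 'a \<Rightarrow> 's \<Rightarrow> real) \<Rightarrow> ('s \<Rightarrow> 'a) \<Rightarrow> 's \<Rightarrow> 's \<Rightarrow> real" where
  "Pmat p d i j = p i (d i) j"

definition rvec :: "('s \<Rightarrow> 'a \<Rightarrow> real) \<Rightarrow> ('s \<Rightarrow> 'a) \<Rightarrow> 's \<Rightarrow> real" where
  "rvec r d i = r i (d i)"

fun mpow :: "('s::finite \<Rightarrow> 's \<Rightarrow> real) \<Rightarrow> nat \<Rightarrow> 's \<Rightarrow> 's \<Rightarrow> real" where
  "mpow P 0 = (\<lambda>i j. if i = j then 1 else 0)"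
| "mpow P (Suc n) = (\<lambda>i j. \<Sum>k\<in>UNIV. mpow P n i k * P k j)"

definition mc_irreducible :: "('s::finite \<Rightarrow> 's \<Rightarrow> real) \<Rightarrow> bool" where
  "mc_irreducible P \<longleftrightarrow> (\<forall>i j. \<exists>n. mpow P n i j > 0)"

text \<open>The (unique, under irreducibility) stationary distribution: pi P = pi, pi 1 = 1.\<close>
definition stat_dist :: "('s::finite \<Rightarrow> 's \<Rightarrow> real) \<Rightarrow> 's \<Rightarrow> real" where
  "stat_dist P = (THE \<pi>. (\<forall>j. (\<Sum>i\<in>UNIV. \<pi> i * P i j) = \<pi> j) \<and> (\<Sum>i\<in>UNIV. \<pi> i) = 1)"

definition J_mu :: "('s::finite \<Rightarrow> 'a \<Rightarrow> 's \<Rightarrow> real) \<Rightarrow> ('s \<Rightarrow> 'a \<Rightarrow> real) \<Rightarrow> ('s \<Rightarrow> 'a) \<Rightarrow> real" where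
  "J_mu p r d = (\<Sum>i\<in>UNIV. stat_dist (Pmat p d) i * rvec r d i)"

definition J_sigma :: "('s::finite \<Rightarrow> 'a \<Rightarrow> 's \<Rightarrow> real) \<Rightarrow> ('s \<Rightarrow> 'a \<Rightarrow> real) \<Rightarrow> ('s \<Rightarrow> 'a) \<Rightarrow> real" where
  "J_sigma p r d = (\<Sum>i\<in>UNIV. stat_dist (Pmat p d) i * (rvec r d i - J_mu p r d)^2)"

definition J_ms :: "real \<Rightarrow> ('s::finite \<Rightarrow> 'a \<Rightarrow> 's \<Rightarrow> real) \<Rightarrow> ('s \<Rightarrow> 'a \<Rightarrow> real) \<Rightarrow> ('s \<Rightarrow> 'a) \<Rightarrow> real" where
  "J_ms \<beta> p r d = J_mu p r d - \<beta> * J_sigma p r d"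

definition f_ms :: "real \<Rightarrow> ('s::finite \<Rightarrow> 'a \<Rightarrow> 's \<Rightarrow> real) \<Rightarrow> ('s \<Rightarrow> 'a \<Rightarrow> real) \<Rightarrow> ('s \<Rightarrow> 'a) \<Rightarrow> 's \<Rightarrow> real" where
  "f_ms \<beta> p r d i = rvec r d i - \<beta> * (rvec r d i - J_mu p r d)^2"

definition is_potential :: "real \<Rightarrow> ('s::finite \<Rightarrow> 'a \<Rightarrow> 's \<Rightarrow> real) \<Rightarrow> ('s \<Rightarrow> 'a \<Rightarrow> real) \<Rightarrow> ('s \<Rightarrow> 'a) \<Rightarrow> ('s \<Rightarrow> real) \<Rightarrow> bool" where
  "is_potential \<beta> p r d g \<longleftrightarrow>
     (\<forall>i. g i = f_ms \<beta> p r d i - J_ms \<beta> p r d + (\<Sum>j\<in>UNIV. Pmat p d i j * g j))"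

end

theory Submission
  imports Defs "HOL-Analysis.Analysis"
begin

text \<open>Let \<open>\<pi>'\<close> be stationary for \<open>P'\<close> and \<open>g\<close> a potential of \<open>d\<close>, so \<open>g = f - J 1 + P g\<close>.
  Then \<open>\<pi>' (P' - P) g = \<pi>' g - \<pi>' P g = \<pi>' f - J\<close>, which turns \<open>\<pi>' f' - J\<close> into the
  bracket of the theorem with \<open>f'\<close> the reward of \<open>d'\<close> penalised around the old mean \<open>J\<^sub>\<mu>\<close>.
  The true metric of \<open>d'\<close> penalises around its own mean \<open>J'\<^sub>\<mu>\<close>, and re-centring a variance
  costs exactly \<open>(J'\<^sub>\<mu> - J\<^sub>\<mu>)\<^sup>2\<close>. The rest is showing that \<open>stat_dist\<close> really is the
  stationary distribution: it exists by a maximum principle and duality, and it is unique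
  because under irreducibility a nonnegative invariant vector vanishing somewhere vanishes
  everywhere.\<close>

definition stochastic :: "('s::finite \<Rightarrow> 's \<Rightarrow> real) \<Rightarrow> bool" where
  "stochastic P \<longleftrightarrow> (\<forall>i j. 0 \<le> P i j) \<and> (\<forall>i. (\<Sum>j\<in>UNIV. P i j) = 1)"

definition invariant :: "('s::finite \<Rightarrow> 's \<Rightarrow> real) \<Rightarrow> ('s \<Rightarrow> real) \<Rightarrow> bool" where
  "invariant P \<mu> \<longleftrightarrow> (\<forall>j. (\<Sum>i\<in>UNIV. \<mu> i * P i j) = \<mu> j)"

lemma stochastic_Pmat:
  assumes "\<And>i a j. 0 \<le> p i a j" and "\<And>i a. (\<Sum>j\<in>UNIV. p i a j) = 1"
  shows "stochastic (Pmat p d)"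
  using assms by (simp add: stochastic_def Pmat_def)

lemma stochastic_no_constant_drift:
  fixes P :: "'s::finite \<Rightarrow> 's \<Rightarrow> real"
  assumes "stochastic P"
  shows "\<not> (\<forall>i. (\<Sum>j\<in>UNIV. P i j * x j) - x i = 1)"
proof
  assume drift: "\<forall>i. (\<Sum>j\<in>UNIV. P i j * x j) - x i = 1"
  have "Max (range x) \<in> range x" by (rule Max_in) auto
  then obtain i where i: "x i = Max (range x)" by (metis rangeE)
  have "(\<Sum>j\<in>UNIV. P i j * x j) \<le> (\<Sum>j\<in>UNIV. P i j * x i)"
    using assms unfolding stochastic_def i by (intro sum_mono mult_left_mono) auto
  also have "\<dots> = x i"
    using assms by (simp add: stochastic_def sum_distrib_right[symmetric])
  finally show False using drift[rule_format, of i] by linarith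
qed

text \<open>The range of \<open>P - I\<close> misses the constant vector \<open>1\<close>, so the orthogonal component
  \<open>z\<close> of \<open>1\<close> with respect to that range is nonzero; \<open>z\<close> annihilates \<open>P - I\<close> from the left
  and \<open>z \<bullet> 1 = z \<bullet> z > 0\<close> allows normalising it.\<close>
lemma stochastic_has_invariant_distribution:
  fixes P :: "'s::finite \<Rightarrow> 's \<Rightarrow> real"
  assumes "stochastic P"
  shows "\<exists>\<pi>. invariant P \<pi> \<and> (\<Sum>i\<in>UNIV. \<pi> i) = 1"
proof -
  define f where "f = (\<lambda>x::real^'s. \<chi> i. (\<Sum>j\<in>UNIV. P i j * x$j) - x$i)"
  define one :: "real^'s" where "one = (\<chi> i. 1)"
  have "linear f"
    by (rule linearI)
      (simp_all add: f_def vec_eq_iff distrib_left sum.distrib sum_distrib_left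
        right_diff_distrib mult.left_commute)
  then have span_range: "span (range f) = range f"
    by (simp add: span_eq_iff linear_subspace_image)
  have one_notin: "one \<notin> range f"
  proof
    assume "one \<in> range f"
    then obtain x where "one = f x" by auto
    then have "\<forall>i. (\<Sum>j\<in>UNIV. P i j * x$j) - x$i = 1"
      by (simp add: f_def one_def vec_eq_iff)
    then show False using stochastic_no_constant_drift[OF assms] by blast
  qed
  obtain y z where y: "y \<in> span (range f)" and dec: "one = y + z"
    and orth: "\<And>w. w \<in> span (range f) \<Longrightarrow> orthogonal z w"
    by (rule orthogonal_subspace_decomp_exists[of "range f" one]) blast
  have "z \<noteq> 0" using one_notin y dec span_range by auto
  then have "z \<bullet> z > 0" by simp
  moreover have "z \<bullet> one = z \<bullet> z"
    using orth[OF y] dec by (simp add: orthogonal_def inner_add_right)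
  ultimately have mass_pos: "(\<Sum>i\<in>UNIV. z$i) > 0"
    by (simp add: inner_vec_def one_def)
  have z_inv: "(\<Sum>i\<in>UNIV. z$i * P i j) = z$j" for j
  proof -
    have "orthogonal z (f (axis j 1))" using orth span_range by auto
    moreover have "f (axis j 1) $ i = P i j - (if i = j then 1 else 0)" for i
      by (simp add: f_def axis_def if_distrib cong: if_cong)
    ultimately have "(\<Sum>i\<in>UNIV. z$i * (P i j - (if i = j then 1 else 0))) = 0"
      by (simp add: orthogonal_def inner_vec_def)
    then have "(\<Sum>i\<in>UNIV. z$i * P i j) - (\<Sum>i\<in>UNIV. z$i * (if i = j then 1 else 0)) = 0"
      by (simp add: right_diff_distrib sum_subtractf)
    then show ?thesis by (simp add: if_distrib cong: if_cong)
  qed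
  define \<pi> where "\<pi> i = z$i / (\<Sum>i\<in>UNIV. z$i)" for i
  have "invariant P \<pi>"
    using z_inv by (simp add: invariant_def \<pi>_def sum_divide_distrib[symmetric])
  moreover have "(\<Sum>i\<in>UNIV. \<pi> i) = 1"
    using mass_pos by (simp add: \<pi>_def sum_divide_distrib[symmetric])
  ultimately show ?thesis by blast
qed

lemma mpow_nonneg:
  assumes "stochastic P"
  shows "0 \<le> mpow P n i j"
  using assms unfolding stochastic_def
  by (induction n arbitrary: j) (auto intro!: sum_nonneg mult_nonneg_nonneg)

lemma invariant_mpow:
  assumes "invariant P \<mu>"
  shows "(\<Sum>i\<in>UNIV. \<mu> i * mpow P n i j) = \<mu> j"
proof (induction n arbitrary: j)
  case 0
  then show ?case by (simp add: if_distrib cong: if_cong)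
next
  case (Suc n)
  have "(\<Sum>i\<in>UNIV. \<mu> i * mpow P (Suc n) i j)
      = (\<Sum>k\<in>UNIV. (\<Sum>i\<in>UNIV. \<mu> i * mpow P n i k) * P k j)"
    by (simp add: sum_distrib_left sum_distrib_right mult.assoc) (rule sum.swap)
  also have "\<dots> = \<mu> j" using Suc assms by (simp add: invariant_def)
  finally show ?case .
qed

lemma invariant_nonneg_vanishing:
  assumes "mc_irreducible P" "stochastic P" "invariant P \<mu>"
    and nonneg: "\<And>i. 0 \<le> \<mu> i" and "\<mu> j = 0"
  shows "\<mu> i = 0"
proof -
  obtain n where n: "mpow P n i j > 0"
    using assms(1) by (auto simp: mc_irreducible_def)
  have "\<mu> i * mpow P n i j \<le> (\<Sum>k\<in>UNIV. \<mu> k * mpow P n k j)"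
    using nonneg mpow_nonneg[OF assms(2)] by (intro member_le_sum) auto
  also have "\<dots> = 0" using invariant_mpow[OF assms(3)] assms(5) by simp
  finally show ?thesis using n nonneg[of i] by (simp add: mult_le_0_iff)
qed

text \<open>Invariance of \<open>|\<delta>|\<close>: the triangle inequality gives \<open>|\<delta>| \<le> |\<delta>| P\<close> componentwise,
  and both sides have the same total mass since \<open>P\<close> is stochastic.\<close>
lemma invariant_abs:
  assumes "stochastic P" "invariant P \<delta>"
  shows "invariant P (\<lambda>i. \<bar>\<delta> i\<bar>)"
proof -
  have le: "\<bar>\<delta> j\<bar> \<le> (\<Sum>i\<in>UNIV. \<bar>\<delta> i\<bar> * P i j)" for j
  proof -
    have "\<bar>\<delta> j\<bar> = \<bar>\<Sum>i\<in>UNIV. \<delta> i * P i j\<bar>"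
      using assms(2) by (simp add: invariant_def)
    also have "\<dots> \<le> (\<Sum>i\<in>UNIV. \<bar>\<delta> i * P i j\<bar>)" by (rule sum_abs)
    finally show ?thesis using assms(1) by (simp add: stochastic_def abs_mult)
  qed
  have "(\<Sum>j\<in>UNIV. (\<Sum>i\<in>UNIV. \<bar>\<delta> i\<bar> * P i j) - \<bar>\<delta> j\<bar>) = 0"
    using assms(1) by (simp add: sum_subtractf stochastic_def sum.swap[of _ UNIV UNIV]
        sum_distrib_left[symmetric])
  then show ?thesis
    using le by (subst (asm) sum_nonneg_eq_0_iff) (auto simp: invariant_def)
qed

text \<open>The positive and negative parts of \<open>\<delta>\<close> are nonnegative invariant vectors of equal
  mass, and at every state one of them vanishes; so one vanishes identically, hence both.\<close>
lemma invariant_zero_mass: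
  assumes irr: "mc_irreducible P" and stoch: "stochastic P" and inv: "invariant P \<delta>"
    and mass: "(\<Sum>i\<in>UNIV. \<delta> i) = 0"
  shows "\<delta> = (\<lambda>_. 0)"
proof -
  define pos where "pos i = (\<bar>\<delta> i\<bar> + \<delta> i) / 2" for i
  define neg where "neg i = (\<bar>\<delta> i\<bar> - \<delta> i) / 2" for i
  have "invariant P (\<lambda>i. \<bar>\<delta> i\<bar>)" by (rule invariant_abs[OF stoch inv])
  then have pos_inv: "invariant P pos" and neg_inv: "invariant P neg"
    using inv by (auto simp: invariant_def pos_def neg_def sum_divide_distrib[symmetric]
        distrib_right left_diff_distrib sum.distrib sum_subtractf)
  have nonneg: "\<And>i. 0 \<le> pos i" "\<And>i. 0 \<le> neg i" by (simp_all add: pos_def neg_def)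
  have same_mass: "(\<Sum>i\<in>UNIV. pos i) = (\<Sum>i\<in>UNIV. neg i)"
    using mass by (simp add: pos_def neg_def sum_divide_distrib[symmetric] sum.distrib sum_subtractf)
  have "pos j = 0 \<or> neg j = 0" for j by (simp add: pos_def neg_def abs_if)
  then have "(\<forall>i. pos i = 0) \<or> (\<forall>i. neg i = 0)"
    using invariant_nonneg_vanishing[OF irr stoch pos_inv nonneg(1)]
      invariant_nonneg_vanishing[OF irr stoch neg_inv nonneg(2)] by blast
  then have "(\<Sum>i\<in>UNIV. pos i) = 0 \<and> (\<Sum>i\<in>UNIV. neg i) = 0"
    using same_mass by auto
  then have "\<forall>i. pos i = 0 \<and> neg i = 0"
    using nonneg by (simp add: sum_nonneg_eq_0_iff)
  moreover have "\<delta> i = pos i - neg i" for i by (simp add: pos_def neg_def field_simps)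
  ultimately show ?thesis by auto
qed

lemma stat_dist_eq:
  assumes irr: "mc_irreducible P" and stoch: "stochastic P"
    and "invariant P \<pi>" "(\<Sum>i\<in>UNIV. \<pi> i) = 1"
  shows "stat_dist P = \<pi>"
  unfolding stat_dist_def
proof (rule the_equality)
  show "(\<forall>j. (\<Sum>i\<in>UNIV. \<pi> i * P i j) = \<pi> j) \<and> (\<Sum>i\<in>UNIV. \<pi> i) = 1"
    using assms(3,4) by (simp add: invariant_def)
next
  fix \<sigma> assume \<sigma>: "(\<forall>j. (\<Sum>i\<in>UNIV. \<sigma> i * P i j) = \<sigma> j) \<and> (\<Sum>i\<in>UNIV. \<sigma> i) = 1"
  have "(\<lambda>i. \<sigma> i - \<pi> i) = (\<lambda>_. 0)"
    using \<sigma> assms(3,4)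
    by (intro invariant_zero_mass[OF irr stoch])
      (auto simp: invariant_def left_diff_distrib sum_subtractf)
  then show "\<sigma> = \<pi>" by (auto simp: fun_eq_iff dest: fun_cong)
qed

lemma stat_dist:
  assumes "mc_irreducible P" "stochastic P"
  shows "invariant P (stat_dist P)" "(\<Sum>i\<in>UNIV. stat_dist P i) = 1"
  using stochastic_has_invariant_distribution[OF assms(2)] stat_dist_eq[OF assms] by auto

lemma performance_difference:
  fixes P P' :: "'s::finite \<Rightarrow> 's \<Rightarrow> real"
  assumes inv: "invariant P' q" and mass: "(\<Sum>i\<in>UNIV. q i) = 1"
    and poisson: "\<And>i. g i = f i - J + (\<Sum>j\<in>UNIV. P i j * g j)"
  shows "(\<Sum>i\<in>UNIV. q i * f' i) - J
       = (\<Sum>i\<in>UNIV. q i * ((\<Sum>j\<in>UNIV. (P' i j - P i j) * g j) + f' i - f i))"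
proof -
  have new_drift: "(\<Sum>i\<in>UNIV. q i * (\<Sum>j\<in>UNIV. P' i j * g j)) = (\<Sum>i\<in>UNIV. q i * g i)"
  proof -
    have "(\<Sum>i\<in>UNIV. q i * (\<Sum>j\<in>UNIV. P' i j * g j))
        = (\<Sum>j\<in>UNIV. (\<Sum>i\<in>UNIV. q i * P' i j) * g j)"
      by (simp add: sum_distrib_left sum_distrib_right mult.assoc) (rule sum.swap)
    then show ?thesis using inv by (simp add: invariant_def)
  qed
  have old_drift: "(\<Sum>i\<in>UNIV. q i * (\<Sum>j\<in>UNIV. P i j * g j))
      = (\<Sum>i\<in>UNIV. q i * g i) - (\<Sum>i\<in>UNIV. q i * f i) + J"
  proof -
    have "(\<Sum>j\<in>UNIV. P i j * g j) = g i - f i + J" for i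
      using poisson[of i] by linarith
    then have "(\<Sum>i\<in>UNIV. q i * (\<Sum>j\<in>UNIV. P i j * g j))
        = (\<Sum>i\<in>UNIV. q i * g i - q i * f i + J * q i)"
      by (simp only:) (simp add: algebra_simps)
    then show ?thesis
      by (simp add: sum.distrib sum_subtractf sum_distrib_left[symmetric] mass)
  qed
  have "(\<Sum>i\<in>UNIV. q i * ((\<Sum>j\<in>UNIV. (P' i j - P i j) * g j) + f' i - f i))
      = (\<Sum>i\<in>UNIV. q i * (\<Sum>j\<in>UNIV. P' i j * g j)) - (\<Sum>i\<in>UNIV. q i * (\<Sum>j\<in>UNIV. P i j * g j))
        + (\<Sum>i\<in>UNIV. q i * f' i) - (\<Sum>i\<in>UNIV. q i * f i)"
    by (simp add: left_diff_distrib right_diff_distrib distrib_left sum_subtractf sum.distrib)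
  then show ?thesis by (simp add: new_drift old_drift)
qed

lemma weighted_sq_dev_shift:
  fixes q a :: "'i \<Rightarrow> real"
  assumes mass: "(\<Sum>i\<in>A. q i) = 1" and mean: "m = (\<Sum>i\<in>A. q i * a i)"
  shows "(\<Sum>i\<in>A. q i * (a i - c)\<^sup>2) = (\<Sum>i\<in>A. q i * (a i - m)\<^sup>2) + (m - c)\<^sup>2"
proof -
  have "q i * (a i - c)\<^sup>2 = q i * (a i - m)\<^sup>2 + 2 * (m - c) * (q i * a i) + (c\<^sup>2 - m\<^sup>2) * q i"
    for i by (simp add: power2_eq_square algebra_simps)
  then have "(\<Sum>i\<in>A. q i * (a i - c)\<^sup>2)
      = (\<Sum>i\<in>A. q i * (a i - m)\<^sup>2) + 2 * (m - c) * m + (c\<^sup>2 - m\<^sup>2)"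
    by (simp add: sum.distrib sum_distrib_left[symmetric] sum_distrib_right[symmetric] mass mean)
  then show ?thesis by (simp add: power2_eq_square algebra_simps)
qed

theorem lemma1:
  fixes p :: "'s::finite \<Rightarrow> 'a::finite \<Rightarrow> 's \<Rightarrow> real"
    and r :: "'s \<Rightarrow> 'a \<Rightarrow> real"
    and \<beta> :: real
    and d d' :: "'s \<Rightarrow> 'a"
    and g :: "'s \<Rightarrow> real"
  assumes p_nonneg: "\<And>i a j. p i a j \<ge> 0"
    and p_stoch: "\<And>i a. (\<Sum>j\<in>UNIV. p i a j) = 1"
    and irred: "\<And>e :: 's \<Rightarrow> 'a. mc_irreducible (Pmat p e)"
    and beta_pos: "\<beta> > 0"
    and pot: "is_potential \<beta> p r d g"
  shows "J_ms \<beta> p r d' - J_ms \<beta> p r d =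
     (\<Sum>i\<in>UNIV. stat_dist (Pmat p d') i *
        ((\<Sum>j\<in>UNIV. (Pmat p d' i j - Pmat p d i j) * g j)
         + rvec r d' i - \<beta> * (rvec r d' i - J_mu p r d)^2
         - rvec r d i + \<beta> * (rvec r d i - J_mu p r d)^2))
     + \<beta> * (J_mu p r d' - J_mu p r d)^2"
proof -
  define q where "q = stat_dist (Pmat p d')"
  define f' where "f' i = rvec r d' i - \<beta> * (rvec r d' i - J_mu p r d)\<^sup>2" for i
  have stoch: "stochastic (Pmat p d')" by (rule stochastic_Pmat[OF p_nonneg p_stoch])
  have inv: "invariant (Pmat p d') q" and mass: "(\<Sum>i\<in>UNIV. q i) = 1"
    unfolding q_def by (rule stat_dist[OF irred stoch])+
  have poisson: "g i = f_ms \<beta> p r d i - J_ms \<beta> p r d + (\<Sum>j\<in>UNIV. Pmat p d i j * g j)"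
    for i using pot unfolding is_potential_def by blast
  have mean': "J_mu p r d' = (\<Sum>i\<in>UNIV. q i * rvec r d' i)"
    by (simp add: J_mu_def q_def)
  have "(\<Sum>i\<in>UNIV. q i * f' i)
      = J_mu p r d' - \<beta> * (\<Sum>i\<in>UNIV. q i * (rvec r d' i - J_mu p r d)\<^sup>2)"
    unfolding f'_def mean' right_diff_distrib sum_subtractf sum_distrib_left
    by (simp add: mult.left_commute)
  also have "(\<Sum>i\<in>UNIV. q i * (rvec r d' i - J_mu p r d)\<^sup>2)
      = J_sigma p r d' + (J_mu p r d' - J_mu p r d)\<^sup>2"
    by (subst weighted_sq_dev_shift[OF mass mean']) (simp add: J_sigma_def q_def)
  finally have "J_ms \<beta> p r d' = (\<Sum>i\<in>UNIV. q i * f' i) + \<beta> * (J_mu p r d' - J_mu p r d)\<^sup>2"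
    unfolding J_ms_def by (simp add: distrib_left)
  moreover have "(\<Sum>i\<in>UNIV. q i * f' i) - J_ms \<beta> p r d
      = (\<Sum>i\<in>UNIV. q i * ((\<Sum>j\<in>UNIV. (Pmat p d' i j - Pmat p d i j) * g j)
          + f' i - f_ms \<beta> p r d i))"
    by (rule performance_difference[OF inv mass poisson])
  moreover have "\<dots> = (\<Sum>i\<in>UNIV. q i *
        ((\<Sum>j\<in>UNIV. (Pmat p d' i j - Pmat p d i j) * g j)
         + rvec r d' i - \<beta> * (rvec r d' i - J_mu p r d)^2
         - rvec r d i + \<beta> * (rvec r d i - J_mu p r d)^2))"
    by (rule sum.cong) (simp_all add: f'_def f_ms_def)
  ultimately show ?thesis unfolding q_def by linarith
qed

end
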